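(* As formal power series in $q$, \[\sum_{\pi\in\mathcal{U}}q^{\mathcal{O}(\pi)}=\frac{1}{(q;q)_\infty^2}\quad\text{and}\quad \sum_{\pi\in\mathcal{D}}q^{\mathcal{O}(\pi')}=(-q;q)_\infty^2,\] where $\mathcal{U}$ is the set of all partitions, $\mathcal{D}$ the set of partitions into distinct parts, $\pi'$ denotes the conjugate of $\pi$, and for $\pi=(\lambda_1,\lambda_2,\dots)$, $\mathcal{O}(\pi)=\lambda_1+\lambda_3+\lambda_5+\cdots$.
   Context: A partition is a finite weakly decreasing sequence of positive integers; the conjugate $\pi'$ of $\pi$ is the partition whose $j$-th part is the number of parts of $\pi$ that are $\ge j$. $(a;q)_\infty=\prod_{n\ge0}(1-aq^n)$. *)

theory Defs
  imports "HOL-Computational_Algebra.Formal_Power_Series"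
begin

definition is_partition :: "nat list \<Rightarrow> bool" where
  "is_partition xs \<longleftrightarrow> sorted_wrt (\<ge>) xs \<and> (\<forall>x\<in>set xs. 0 < x)"

definition conj_part :: "nat list \<Rightarrow> nat list" where
  "conj_part xs = map (\<lambda>j. length (filter (\<lambda>x. j \<le> x) xs)) [1..<Suc (fold max xs 0)]"

text \<open>O(pi) = lambda_1 + lambda_3 + lambda_5 + ... (1-based odd positions = 0-based even indices).\<close>
definition odd_sum :: "nat list \<Rightarrow> nat" where
  "odd_sum xs = (\<Sum>i<length xs. if even i then xs ! i else 0)"

text \<open>Infinite q-Pochhammer symbol (a;q)_infinity as the limit, in the usual (subdegree)
  topology on formal power series, of the finite products.\<close>
definition qpoch_inf :: "real fps \<Rightarrow> real fps" where
  "qpoch_inf a = lim (\<lambda>N. \<Prod>k<N. (1 - a * fps_X ^ k))"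

end

theory Submission
  imports Defs "HOL-Library.More_List"
begin

text \<open>
  A partition \<open>\<lambda>\<^sub>1 \<ge> \<dots> \<ge> \<lambda>\<^sub>L\<close> (padded with zeros) is the same as its sequence of
  differences \<open>d\<^sub>m = \<lambda>\<^sub>m - \<lambda>\<^sub>m\<^sub>+\<^sub>1\<close>, which are arbitrary natural numbers. Since \<open>d\<^sub>m\<close> occurs in
  \<open>\<lambda>\<^sub>1, \<dots>, \<lambda>\<^sub>m\<close>, it contributes \<open>\<lceil>m/2\<rceil> d\<^sub>m\<close> to \<open>\<O>(\<lambda>)\<close>, and every weight \<open>k \<ge> 1\<close> arises for
  exactly two values of \<open>m\<close>: hence \<open>1/(q;q)\<^sub>\<infinity>\<^sup>2\<close>. A part \<open>x\<close> of \<open>\<pi>\<close> adds one to each of the first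
  \<open>x\<close> parts of \<open>\<pi>'\<close>, of which \<open>\<lceil>x/2\<rceil>\<close> have odd index, so \<open>\<O>(\<pi>') = \<Sum>\<^sub>x\<^sub>\<in>\<^sub>\<pi> \<lceil>x/2\<rceil>\<close>; for distinct
  parts this gives \<open>\<Prod>\<^sub>x\<^sub>\<ge>\<^sub>1 (1 + q\<^bsup>\<lceil>x/2\<rceil>\<^esup>) = (-q;q)\<^sub>\<infinity>\<^sup>2\<close>. The infinite products are compared
  coefficientwise: the first \<open>n + 1\<close> coefficients of each of them are those of a finite product.
\<close>

unbundle fps_syntax

section \<open>Formal power series\<close>

definition fps_eq_upto :: "nat \<Rightarrow> 'a fps \<Rightarrow> 'a fps \<Rightarrow> bool" where
  "fps_eq_upto n f g \<longleftrightarrow> (\<forall>k\<le>n. f $ k = g $ k)"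

lemma fps_eq_upto_refl [simp]: "fps_eq_upto n f f"
  by (simp add: fps_eq_upto_def)

lemma fps_eq_upto_sym: "fps_eq_upto n f g \<longleftrightarrow> fps_eq_upto n g f"
  by (auto simp: fps_eq_upto_def)

lemma fps_eq_upto_trans [trans]:
  "fps_eq_upto n f g \<Longrightarrow> fps_eq_upto n g h \<Longrightarrow> fps_eq_upto n f h"
  by (simp add: fps_eq_upto_def)

lemma fps_eq_upto_mono: "fps_eq_upto n f g \<Longrightarrow> m \<le> n \<Longrightarrow> fps_eq_upto m f g"
  by (simp add: fps_eq_upto_def)

lemma fps_eq_upto_mult:
  fixes f g :: "'a :: {comm_monoid_add, times} fps"
  assumes "fps_eq_upto n f f'" "fps_eq_upto n g g'"
  shows "fps_eq_upto n (f * g) (f' * g')"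
  using assms unfolding fps_eq_upto_def fps_mult_nth by (auto intro!: sum.cong)

lemma fps_eq_upto_power:
  fixes f :: "'a :: comm_semiring_1 fps"
  shows "fps_eq_upto n f g \<Longrightarrow> fps_eq_upto n (f ^ k) (g ^ k)"
  by (induction k) (simp_all add: fps_eq_upto_mult)

lemma fps_eq_upto_prod:
  fixes f g :: "'b \<Rightarrow> 'a :: comm_semiring_1 fps"
  shows "(\<And>i. i \<in> I \<Longrightarrow> fps_eq_upto n (f i) (g i)) \<Longrightarrow>
    fps_eq_upto n (\<Prod>i\<in>I. f i) (\<Prod>i\<in>I. g i)"
  by (induction I rule: infinite_finite_induct) (simp_all add: fps_eq_upto_mult)

lemma fps_eq_upto_one_minus:
  fixes f :: "'a :: ring_1 fps"
  shows "(\<And>k. k \<le> n \<Longrightarrow> f $ k = 0) \<Longrightarrow> fps_eq_upto n (1 - f) 1"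
  by (simp add: fps_eq_upto_def)

lemma fps_eq_upto_lim:
  fixes f :: "nat \<Rightarrow> 'a :: group_add fps"
  assumes stable: "\<And>m m'. m \<le> m' \<Longrightarrow> fps_eq_upto m (f m) (f m')"
  shows "fps_eq_upto n (lim f) (f n)"
proof -
  define g where "g = Abs_fps (\<lambda>k. f k $ k)"
  have "f \<longlonglongrightarrow> g"
  proof (rule tendsto_fpsI)
    fix k
    show "eventually (\<lambda>m. f m $ k = g $ k) sequentially"
      unfolding eventually_sequentially
      using stable by (metis fps_eq_upto_def fps_nth_Abs_fps g_def order_refl)
  qed
  then have "lim f = g"
    by (rule limI)
  then show ?thesis
    using stable by (auto simp: g_def fps_eq_upto_def)
qed

lemma fps_eq_upto_qpoch_partial:
  fixes a :: "'a :: comm_ring_1 fps"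
  assumes "a $ 0 = 0" "n \<le> n'"
  shows "fps_eq_upto n (\<Prod>k<n. 1 - a * fps_X ^ k) (\<Prod>k<n'. 1 - a * fps_X ^ k)"
proof -
  define P where "P A = (\<Prod>k\<in>A. 1 - a * fps_X ^ k)" for A
  have "fps_eq_upto n (P {n..<n'}) (\<Prod>k\<in>{n..<n'}. 1)"
    unfolding P_def using assms(1)
    by (intro fps_eq_upto_prod fps_eq_upto_one_minus) (auto simp: fps_X_power_mult_right_nth)
  then have "fps_eq_upto n (P {..<n} * P {n..<n'}) (P {..<n} * 1)"
    by (intro fps_eq_upto_mult) simp_all
  moreover have "P {..<n} * P {n..<n'} = P {..<n'}"
    unfolding P_def using assms(2)
    by (metis atLeast0LessThan prod.atLeastLessThan_concat zero_le)
  ultimately show ?thesis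
    by (simp add: P_def fps_eq_upto_sym)
qed

lemma fps_eq_upto_qpoch_inf:
  assumes "a $ 0 = 0"
  shows "fps_eq_upto n (qpoch_inf a) (\<Prod>k<n. 1 - a * fps_X ^ k)"
  unfolding qpoch_inf_def using assms
  by (intro fps_eq_upto_lim fps_eq_upto_qpoch_partial)

lemma fps_nth_sum_X_power_indicator:
  assumes "finite A"
  shows "(\<Sum>x\<in>A. fps_X ^ e x :: 'a :: comm_semiring_1 fps) $ n = of_nat (card {x\<in>A. e x = n})"
  using assms by (simp add: fps_sum_nth of_nat_sum [symmetric] sum.If_cases Int_def conj_commute eq_commute)

lemma fps_nth_prod_geometric:
  fixes w :: "nat \<Rightarrow> nat"
  shows "(\<Prod>m<L. \<Sum>d\<le>M. fps_X ^ (w m * d) :: 'a :: comm_semiring_1 fps) $ n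
     = of_nat (card {g \<in> PiE {..<L} (\<lambda>_. {..M}). (\<Sum>m<L. w m * g m) = n})"
proof -
  have "(\<Prod>m<L. \<Sum>d\<le>M. fps_X ^ (w m * d) :: 'a fps)
      = (\<Sum>g\<in>PiE {..<L} (\<lambda>_. {..M}). \<Prod>m<L. fps_X ^ (w m * g m))"
    by (rule prod_sum_PiE) auto
  also have "\<dots> = (\<Sum>g\<in>PiE {..<L} (\<lambda>_. {..M}). fps_X ^ (\<Sum>m<L. w m * g m))"
    by (simp add: power_sum)
  finally show ?thesis
    by (simp add: fps_nth_sum_X_power_indicator finite_PiE)
qed

lemma fps_nth_prod_one_plus_X_power:
  fixes w :: "'b \<Rightarrow> nat"
  assumes "finite A"
  shows "(\<Prod>x\<in>A. 1 + fps_X ^ w x :: 'a :: comm_semiring_1 fps) $ n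
     = of_nat (card {T \<in> Pow A. (\<Sum>x\<in>T. w x) = n})"
proof -
  have "(\<Prod>x\<in>A. 1 + fps_X ^ w x :: 'a fps) = (\<Sum>T\<in>Pow A. fps_X ^ (\<Sum>x\<in>T. w x))"
    using prod_add[OF assms, of "\<lambda>x. fps_X ^ w x" "\<lambda>_. 1"]
    by (simp add: add.commute power_sum)
  then show ?thesis
    using assms by (simp add: fps_nth_sum_X_power_indicator)
qed

lemma prod_lessThan_double:
  fixes h :: "nat \<Rightarrow> 'a :: comm_monoid_mult"
  shows "(\<Prod>m<2 * N. h (m div 2)) = (\<Prod>k<N. h k ^ 2)"
  by (induction N) (simp_all add: power2_eq_square mult_ac)

section \<open>Partitions and their difference sequences\<close>

lemma odd_sum_Nil [simp]: "odd_sum [] = 0"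
  by (simp add: odd_sum_def)

lemma odd_sum_singleton [simp]: "odd_sum [x] = x"
  by (simp add: odd_sum_def)

lemma odd_sum_Cons_Cons [simp]: "odd_sum (x # y # xs) = x + odd_sum xs"
  unfolding odd_sum_def by (simp add: sum.lessThan_Suc_shift cong: if_cong del: sum.lessThan_Suc)

lemma odd_sum_replicate_0 [simp]: "odd_sum (replicate k 0) = 0"
  by (simp add: odd_sum_def)

lemma odd_sum_append_replicate_0 [simp]: "odd_sum (xs @ replicate k 0) = odd_sum xs"
proof (induction xs rule: induct_list012)
  case (2 x)
  show ?case by (cases k) simp_all
qed simp_all

lemma length_le_twice_odd_sum: "is_partition p \<Longrightarrow> length p \<le> 2 * odd_sum p"
  by (induction p rule: induct_list012) (auto simp: is_partition_def)

lemma sum_lessThan_if_even: "(\<Sum>i<n. if even i then c else 0) = (n + 1) div 2 * (c :: nat)"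
  by (induction n) (auto simp: algebra_simps elim!: evenE oddE)

lemma sorted_desc_eq_filter_pos_append_zeros:
  assumes "sorted_wrt (\<ge>) (ys :: nat list)"
  obtains k where "ys = filter (\<lambda>x. 0 < x) ys @ replicate k 0"
  using assms
proof (induction ys arbitrary: thesis)
  case (Cons y ys)
  show ?case
  proof (cases "y = 0")
    case True
    with Cons.prems(2) have zeros: "\<forall>x\<in>set (y # ys). x = 0"
      by auto
    then have "y # ys = replicate (Suc (length ys)) 0"
      by (simp add: replicate_eqI)
    moreover have "filter (\<lambda>x. 0 < x) (y # ys) = []"
      using zeros by (simp only: filter_empty_conv) simp
    ultimately show ?thesis
      using Cons.prems(1)[of "Suc (length ys)"] by simp
  next
    case False
    with Cons show ?thesis by auto
  qed
qed simp

definition suffix_sums :: "nat \<Rightarrow> (nat \<Rightarrow> nat) \<Rightarrow> nat list" where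
  "suffix_sums L g = map (\<lambda>k. \<Sum>m\<in>{k..<L}. g m) [0..<L]"

text \<open>Restricted to \<open>{..<L}\<close>, so that the differences of a partition lie in \<open>{..<L} \<rightarrow>\<^sub>E UNIV\<close>.\<close>
definition differences :: "nat \<Rightarrow> nat list \<Rightarrow> nat \<Rightarrow> nat" where
  "differences L ys = restrict (\<lambda>m. nth_default 0 ys m - nth_default 0 ys (Suc m)) {..<L}"

lemma sum_diff_Suc_antimono:
  fixes f :: "nat \<Rightarrow> nat"
  assumes "antimono f" "k \<le> L"
  shows "(\<Sum>m\<in>{k..<L}. f m - f (Suc m)) = f k - f L"
proof -
  have "int (\<Sum>m\<in>{k..<L}. f m - f (Suc m)) = (\<Sum>m\<in>{k..<L}. int (f m) - int (f (Suc m)))"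
    using assms(1) by (simp add: antimonoD)
  also have "\<dots> = int (f k - f L)"
    using sum_Suc_diff'[of k L "\<lambda>m. - int (f m)"] assms by (simp add: antimonoD)
  finally show ?thesis
    by (simp only: of_nat_eq_iff)
qed

lemma antimono_nth_default_0:
  assumes "sorted_wrt (\<ge>) (ys :: nat list)"
  shows "antimono (nth_default 0 ys)"
proof (rule antimonoI)
  fix i j :: nat
  assume "i \<le> j"
  with assms show "nth_default 0 ys j \<le> nth_default 0 ys i"
    by (cases "i = j") (auto simp: nth_default_def sorted_wrt_iff_nth_less)
qed

lemma suffix_sums_differences:
  assumes "sorted_wrt (\<ge>) ys" "length ys \<le> L"
  shows "suffix_sums L (differences L ys) = ys @ replicate (L - length ys) 0"
proof (rule nth_equalityI)
  fix k assume "k < length (suffix_sums L (differences L ys))"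
  then have "k < L" by (simp add: suffix_sums_def)
  then have "suffix_sums L (differences L ys) ! k = nth_default 0 ys k - nth_default 0 ys L"
    using sum_diff_Suc_antimono[OF antimono_nth_default_0[OF assms(1)]]
    by (simp add: suffix_sums_def differences_def)
  then show "suffix_sums L (differences L ys) ! k = (ys @ replicate (L - length ys) 0) ! k"
    using assms(2) \<open>k < L\<close> by (simp add: nth_default_beyond nth_default_def nth_append)
qed (use assms in \<open>simp add: suffix_sums_def\<close>)

lemma differences_suffix_sums:
  assumes "g \<in> {..<L} \<rightarrow>\<^sub>E UNIV"
  shows "differences L (suffix_sums L g) = g"
proof
  fix m
  show "differences L (suffix_sums L g) m = g m"
  proof (cases "m < L")
    case True
    then show ?thesis
      by (simp add: differences_def suffix_sums_def nth_default_def sum.atLeast_Suc_lessThan)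
  next
    case False
    then show ?thesis
      using assms by (auto simp: differences_def PiE_def extensional_def)
  qed
qed

lemma sorted_suffix_sums: "sorted_wrt (\<ge>) (suffix_sums L g)"
  by (auto simp: suffix_sums_def sorted_wrt_iff_nth_less intro!: sum_mono2)

text \<open>\<open>g m\<close> enters the entries \<open>0, \<dots>, m\<close> of the suffix sums, \<open>Suc (m div 2)\<close> of which have even index.\<close>
lemma odd_sum_suffix_sums: "odd_sum (suffix_sums L g) = (\<Sum>m<L. Suc (m div 2) * g m)"
proof (induction L)
  case (Suc L)
  have "odd_sum (suffix_sums (Suc L) g)
      = (\<Sum>i<Suc L. (if even i then \<Sum>m\<in>{i..<L}. g m else 0) + (if even i then g L else 0))"
    unfolding odd_sum_def suffix_sums_def
    by (intro sum.cong) (auto simp: sum.atLeastLessThan_Suc simp del: upt_Suc)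
  also have "\<dots> = odd_sum (suffix_sums L g) + Suc (L div 2) * g L"
    unfolding odd_sum_def suffix_sums_def sum.distrib sum_lessThan_if_even
    by (auto simp: sum_lessThan_if_even intro!: sum.cong)
  finally show ?case
    using Suc by simp
qed (simp add: suffix_sums_def)

lemma bij_betw_differences_partitions:
  "bij_betw (differences L) {p. is_partition p \<and> length p \<le> L} ({..<L} \<rightarrow>\<^sub>E UNIV)"
proof (rule bij_betw_byWitness[where f' = "\<lambda>g. filter (\<lambda>x. 0 < x) (suffix_sums L g)"])
  show "\<forall>p\<in>{p. is_partition p \<and> length p \<le> L}.
      filter (\<lambda>x. 0 < x) (suffix_sums L (differences L p)) = p"
    by (auto simp: is_partition_def suffix_sums_differences)
  show "\<forall>g\<in>{..<L} \<rightarrow>\<^sub>E UNIV. differences L (filter (\<lambda>x. 0 < x) (suffix_sums L g)) = g"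
  proof
    fix g :: "nat \<Rightarrow> nat" assume g: "g \<in> {..<L} \<rightarrow>\<^sub>E UNIV"
    obtain k where "suffix_sums L g = filter (\<lambda>x. 0 < x) (suffix_sums L g) @ replicate k 0"
      using sorted_desc_eq_filter_pos_append_zeros[OF sorted_suffix_sums] .
    then have "differences L (filter (\<lambda>x. 0 < x) (suffix_sums L g)) = differences L (suffix_sums L g)"
      unfolding differences_def by (metis nth_default_append_trailing)
    then show "differences L (filter (\<lambda>x. 0 < x) (suffix_sums L g)) = g"
      using differences_suffix_sums[OF g] by simp
  qed
  show "differences L ` {p. is_partition p \<and> length p \<le> L} \<subseteq> {..<L} \<rightarrow>\<^sub>E UNIV"
    by (simp add: differences_def image_subset_iff)
  show "(\<lambda>g. filter (\<lambda>x. 0 < x) (suffix_sums L g)) ` ({..<L} \<rightarrow>\<^sub>E UNIV)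
      \<subseteq> {p. is_partition p \<and> length p \<le> L}"
    using sorted_suffix_sums
    by (auto simp: is_partition_def sorted_wrt_filter suffix_sums_def intro: order.trans[OF length_filter_le])
qed

lemma odd_sum_eq_weighted_differences:
  assumes "is_partition p" "length p \<le> L"
  shows "odd_sum p = (\<Sum>m<L. Suc (m div 2) * differences L p m)"
proof -
  have "odd_sum p = odd_sum (suffix_sums L (differences L p))"
    using assms by (simp add: is_partition_def suffix_sums_differences)
  then show ?thesis
    by (simp add: odd_sum_suffix_sums)
qed

lemma card_partitions_odd_sum:
  assumes "2 * n \<le> L"
  shows "card {p. is_partition p \<and> odd_sum p = n}
       = card {g \<in> {..<L} \<rightarrow>\<^sub>E UNIV. (\<Sum>m<L. Suc (m div 2) * g m) = n}"
proof -
  have "{p. is_partition p \<and> odd_sum p = n}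
      = {p \<in> {p. is_partition p \<and> length p \<le> L}. odd_sum p = n}"
    using assms length_le_twice_odd_sum by fastforce
  moreover have "bij_betw (differences L) {p \<in> {p. is_partition p \<and> length p \<le> L}. odd_sum p = n}
      {g \<in> {..<L} \<rightarrow>\<^sub>E UNIV. (\<Sum>m<L. Suc (m div 2) * g m) = n}"
    using bij_betw_differences_partitions
    by (rule bij_betw_Collect) (metis mem_Collect_eq odd_sum_eq_weighted_differences)
  ultimately show ?thesis
    by (simp add: bij_betw_same_card)
qed

lemma PiE_UNIV_weighted_sum_eq_PiE_atMost:
  fixes w :: "'a \<Rightarrow> nat"
  assumes "finite A" "\<And>m. 0 < w m" "n \<le> M"
  shows "{g \<in> A \<rightarrow>\<^sub>E UNIV. (\<Sum>m\<in>A. w m * g m) = n}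
       = {g \<in> A \<rightarrow>\<^sub>E {..M}. (\<Sum>m\<in>A. w m * g m) = n}"
proof -
  have "g m \<le> (\<Sum>m\<in>A. w m * g m)" if "m \<in> A" for g m
  proof -
    have "g m \<le> w m * g m"
      using assms(2)[of m] by simp
    also have "\<dots> \<le> (\<Sum>m\<in>A. w m * g m)"
      using that assms(1) by (intro member_le_sum) auto
    finally show ?thesis .
  qed
  then show ?thesis
    using assms(3) by (auto simp: PiE_iff intro: order.trans)
qed

section \<open>Strict partitions and the conjugate\<close>

lemma sum_lessThan_if_even_less:
  assumes "x \<le> M"
  shows "(\<Sum>i<M. if even i \<and> i < x then 1 else 0) = (x + 1) div (2 :: nat)"
  using assms
proof (induction M rule: dec_induct)
  case base
  have "(\<Sum>i<x. if even i \<and> i < x then 1 else 0) = (\<Sum>i<x. if even i then 1 else (0 :: nat))"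
    by (intro sum.cong) auto
  also have "\<dots> = (x + 1) div 2 * 1"
    by (rule sum_lessThan_if_even)
  finally show ?case
    by simp
qed simp

lemma sum_even_length_filter:
  "\<forall>x\<in>set p. x \<le> M \<Longrightarrow>
    (\<Sum>i<M. if even i then length (filter (\<lambda>x. Suc i \<le> x) p) else 0)
      = (\<Sum>x\<leftarrow>p. (x + 1) div 2)"
proof (induction p)
  case (Cons x p)
  have "(\<Sum>i<M. if even i then length (filter (\<lambda>y. Suc i \<le> y) (x # p)) else 0)
      = (\<Sum>i<M. (if even i \<and> i < x then 1 else 0)
          + (if even i then length (filter (\<lambda>y. Suc i \<le> y) p) else 0))"
    by (intro sum.cong) auto
  with Cons show ?case
    by (simp add: sum.distrib sum_lessThan_if_even_less)
qed simp

lemma odd_sum_conj_part: "odd_sum (conj_part p) = (\<Sum>x\<leftarrow>p. (x + 1) div 2)"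
proof -
  define M where "M = fold max p 0"
  have "M = Max (set (0 # p))"
    unfolding M_def by (simp only: Max.set_eq_fold)
  then have bound: "\<forall>x\<in>set p. x \<le> M"
    by simp
  have "odd_sum (conj_part p)
      = (\<Sum>i<M. if even i then length (filter (\<lambda>x. Suc i \<le> x) p) else 0)"
    unfolding conj_part_def odd_sum_def M_def[symmetric]
    by (intro sum.cong) (auto simp del: upt_Suc)
  also have "\<dots> = (\<Sum>x\<leftarrow>p. (x + 1) div 2)"
    using bound by (rule sum_even_length_filter)
  finally show ?thesis .
qed

lemma bij_betw_set_strict_partitions:
  "bij_betw set {p. is_partition p \<and> distinct p} {T. finite T \<and> 0 \<notin> T}"
proof (rule bij_betw_byWitness[where f' = "\<lambda>T. rev (sorted_list_of_set T)"])
  show "\<forall>p\<in>{p. is_partition p \<and> distinct p}. rev (sorted_list_of_set (set p)) = p"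
  proof
    fix p assume "p \<in> {p. is_partition p \<and> distinct p}"
    then have "sorted (rev p)" "distinct (rev p)"
      by (auto simp: is_partition_def sorted_wrt_rev)
    then have "sorted_list_of_set (set (rev p)) = rev p"
      by (intro sorted_distinct_set_unique) auto
    then show "rev (sorted_list_of_set (set p)) = p"
      by simp
  qed
  show "\<forall>T\<in>{T. finite T \<and> 0 \<notin> T}. set (rev (sorted_list_of_set T)) = T"
    by simp
  show "set ` {p. is_partition p \<and> distinct p} \<subseteq> {T. finite T \<and> 0 \<notin> T}"
    by (auto simp: is_partition_def)
  show "(\<lambda>T. rev (sorted_list_of_set T)) ` {T. finite T \<and> 0 \<notin> T}
      \<subseteq> {p. is_partition p \<and> distinct p}"
  proof clarify
    fix T :: "nat set"
    assume T: "finite T" "0 \<notin> T"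
    have "sorted_wrt (\<ge>) (rev (sorted_list_of_set T))"
      by (simp add: sorted_wrt_rev)
    with T show "is_partition (rev (sorted_list_of_set T)) \<and> distinct (rev (sorted_list_of_set T))"
      by (auto simp: is_partition_def intro!: gr0I)
  qed
qed

lemma card_strict_partitions_odd_sum_conj_part:
  assumes "2 * n \<le> L"
  shows "card {p. is_partition p \<and> distinct p \<and> odd_sum (conj_part p) = n}
       = card {T \<in> Pow {1..L}. (\<Sum>x\<in>T. (x + 1) div 2) = n}"
proof -
  have "T \<subseteq> {1..L} \<longleftrightarrow> finite T \<and> 0 \<notin> T"
    if weight: "(\<Sum>x\<in>T. (x + 1) div 2) = n" for T
  proof
    assume T: "finite T \<and> 0 \<notin> T"
    show "T \<subseteq> {1..L}"
    proof
      fix x assume "x \<in> T"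
      with T have "(x + 1) div 2 \<le> (\<Sum>x\<in>T. (x + 1) div 2)" "x \<noteq> 0"
        by (auto intro: member_le_sum) (metis not_gr0)
      moreover have "x \<le> 2 * ((x + 1) div 2)"
        by presburger
      ultimately show "x \<in> {1..L}"
        using weight assms by simp
    qed
  qed (auto intro: finite_subset)
  then have "{T \<in> Pow {1..L}. (\<Sum>x\<in>T. (x + 1) div 2) = n}
      = {T \<in> {T. finite T \<and> 0 \<notin> T}. (\<Sum>x\<in>T. (x + 1) div 2) = n}"
    by blast
  moreover have "bij_betw set {p \<in> {p. is_partition p \<and> distinct p}. odd_sum (conj_part p) = n}
      {T \<in> {T. finite T \<and> 0 \<notin> T}. (\<Sum>x\<in>T. (x + 1) div 2) = n}"
    using bij_betw_set_strict_partitions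
    by (rule bij_betw_Collect) (simp add: odd_sum_conj_part sum_list_distinct_conv_sum_set)
  ultimately show ?thesis
    using bij_betw_same_card by (metis (no_types, lifting) Collect_cong mem_Collect_eq)
qed

section \<open>The generating functions\<close>

lemma qpoch_partial_X_squared:
  "(\<Prod>k<N. 1 - fps_X * fps_X ^ k :: 'a :: comm_ring_1 fps) ^ 2
     = (\<Prod>m<2 * N. 1 - fps_X ^ Suc (m div 2))"
  using prod_lessThan_double[of "\<lambda>k. 1 - fps_X ^ Suc k :: 'a fps" N]
  by (simp add: prod_power_distrib)

lemma qpoch_partial_minus_X_squared:
  "(\<Prod>k<N. 1 - (- fps_X) * fps_X ^ k :: 'a :: comm_ring_1 fps) ^ 2
     = (\<Prod>x\<in>{1..2 * N}. 1 + fps_X ^ ((x + 1) div 2))"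
proof -
  have "(\<Prod>x\<in>{1..2 * N}. 1 + fps_X ^ ((x + 1) div 2) :: 'a fps)
      = (\<Prod>m<2 * N. 1 + fps_X ^ Suc (m div 2))"
    unfolding One_nat_def prod.atLeast1_atMost_eq by simp
  also have "\<dots> = (\<Prod>k<N. (1 + fps_X ^ Suc k) ^ 2)"
    by (rule prod_lessThan_double)
  also have "\<dots> = (\<Prod>k<N. 1 + fps_X ^ Suc k) ^ 2"
    by (rule prod_power_distrib [symmetric])
  finally show ?thesis
    by simp
qed

lemma qpoch_X_squared_times_partitions_odd_sum:
  "qpoch_inf fps_X ^ 2 * Abs_fps (\<lambda>n. of_nat (card {p. is_partition p \<and> odd_sum p = n})) = 1"
  (is "?Q ^ 2 * ?G = 1")
proof (rule fps_ext)
  fix n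
  define L where "L = 2 * Suc n"
  define w :: "nat \<Rightarrow> nat" where "w m = Suc (m div 2)" for m
  \<comment> \<open>the geometric series of \<open>1 / (1 - fps_X ^ w m)\<close>, truncated after degree \<open>n\<close>\<close>
  define T :: "real fps" where "T = (\<Prod>m<L. \<Sum>d\<le>n. fps_X ^ (w m * d))"
  have "fps_eq_upto n ?G T"
    unfolding fps_eq_upto_def
  proof (intro allI impI)
    fix k assume "k \<le> n"
    then have "card {p. is_partition p \<and> odd_sum p = k}
        = card {g \<in> {..<L} \<rightarrow>\<^sub>E {..n}. (\<Sum>m<L. w m * g m) = k}"
      using card_partitions_odd_sum[of k L] PiE_UNIV_weighted_sum_eq_PiE_atMost[of "{..<L}" w k n]
      by (simp add: L_def w_def)
    then show "?G $ k = T $ k"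
      by (simp add: T_def fps_nth_prod_geometric)
  qed
  moreover have "fps_eq_upto n ?Q (\<Prod>k<Suc n. 1 - fps_X * fps_X ^ k)"
    by (rule fps_eq_upto_mono[OF fps_eq_upto_qpoch_inf]) simp_all
  ultimately have "fps_eq_upto n (?Q ^ 2 * ?G) ((\<Prod>m<L. 1 - fps_X ^ w m) * T)"
    unfolding L_def w_def qpoch_partial_X_squared[symmetric]
    by (intro fps_eq_upto_mult fps_eq_upto_power)
  also have "(\<Prod>m<L. 1 - fps_X ^ w m) * T = (\<Prod>m<L. 1 - (fps_X ^ w m) ^ Suc n)"
    unfolding T_def power_mult prod.distrib[symmetric] sum_gp_basic ..
  also have "fps_eq_upto n \<dots> (\<Prod>m<L. 1)"
  proof (intro fps_eq_upto_prod fps_eq_upto_one_minus)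
    fix m k assume "k \<le> n"
    have "k \<noteq> w m * Suc n"
      using \<open>k \<le> n\<close> by (simp add: w_def)
    then show "(fps_X ^ w m) ^ Suc n $ k = 0"
      by (simp only: power_mult [symmetric] fps_X_power_nth if_False)
  qed
  finally show "(?Q ^ 2 * ?G) $ n = 1 $ n"
    by (simp add: fps_eq_upto_def)
qed

lemma generating_function_strict_partitions_odd_sum_conj_part:
  "Abs_fps (\<lambda>n. of_nat (card {p. is_partition p \<and> distinct p \<and> odd_sum (conj_part p) = n}))
     = qpoch_inf (- fps_X) ^ 2"
  (is "?G = ?Q ^ 2")
proof (rule fps_ext)
  fix n
  have "fps_eq_upto n ?Q (\<Prod>k<Suc n. 1 - (- fps_X) * fps_X ^ k)"
    by (rule fps_eq_upto_mono[OF fps_eq_upto_qpoch_inf]) simp_all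
  then have "fps_eq_upto n (?Q ^ 2) (\<Prod>x\<in>{1..2 * Suc n}. 1 + fps_X ^ ((x + 1) div 2))"
    unfolding qpoch_partial_minus_X_squared[symmetric] by (rule fps_eq_upto_power)
  then have "(?Q ^ 2) $ n = (\<Prod>x\<in>{1..2 * Suc n}. 1 + fps_X ^ ((x + 1) div 2)) $ n"
    by (simp add: fps_eq_upto_def)
  also have "\<dots> = of_nat (card {T \<in> Pow {1..2 * Suc n}. (\<Sum>x\<in>T. (x + 1) div 2) = n})"
    by (rule fps_nth_prod_one_plus_X_power) simp
  also have "\<dots> = ?G $ n"
    using card_strict_partitions_odd_sum_conj_part[of n "2 * Suc n"] by simp
  finally show "?G $ n = (?Q ^ 2) $ n" ..
qed

theorem theorem12:
  shows "Abs_fps (\<lambda>n. of_nat (card {p. is_partition p \<and> odd_sum p = n}))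
           = inverse ((qpoch_inf fps_X) ^ 2)
       \<and> Abs_fps (\<lambda>n. of_nat (card {p. is_partition p \<and> distinct p \<and> odd_sum (conj_part p) = n}))
           = (qpoch_inf (- fps_X)) ^ 2"
proof
  show "Abs_fps (\<lambda>n. of_nat (card {p. is_partition p \<and> odd_sum p = n}))
      = inverse ((qpoch_inf fps_X) ^ 2)"
    by (rule fps_inverse_unique [symmetric, OF qpoch_X_squared_times_partitions_odd_sum])
qed (rule generating_function_strict_partitions_odd_sum_conj_part)

end
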